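(* Let $f:\mathbb{X}(N,k)\to\mathbb{R}$ be a monotone $k$-submodular function, let $\hat{\mathbf{x}}\in\mathcal{X}$, and let $\hat{\mathbf{S}}=(\hat S_1,\dots,\hat S_k)$ be an optimal solution of the defender's problem defining $\Phi_D(\hat{\mathbf{x}})$, so that $\Phi_D(\hat{\mathbf{x}})=f(\hat{\mathbf{S}})$. Then for every $\mathbf{x}\in\mathcal{X}$, $$\Phi_D(\mathbf{x})\;\ge\;\Phi_D(\hat{\mathbf{x}})-\sum_{q=1}^k\sum_{i\in\hat S_q}\rho_{q,i}(\boldsymbol{\emptyset})\,x_{q,i}.$$
   Context: Let $n,k$ be positive integers and $N=\{1,\dots,n\}$. $\mathbb{X}(N,k)$ denotes the set of $k$-tuples $\mathbf{S}=(S_1,\dots,S_k)$ of pairwise disjoint subsets of $N$; such a tuple is identified with $\mathbf{s}\in\{0,1\}^{kn}$ where $s_{q,i}=1$ iff $i\in S_q$. For $\mathbf{X},\mathbf{Y}\in\mathbb{X}(N,k)$ let $\mathbf{X}\sqcap\mathbf{Y}=(X_1\cap Y_1,\dots,X_k\cap Y_k)$ and $\mathbf{X}\sqcup\mathbf{Y}$ be the tuple whose $i$-th component is $(X_i\cup Y_i)\setminus\bigcup_{q\ne i}(X_q\cup Y_q)$. A function $f:\mathbb{X}(N,k)\to\mathbb{R}$ is $k$-submodular if $f(\mathbf{X})+f(\mathbf{Y})\ge f(\mathbf{X}\sqcap\mathbf{Y})+f(\mathbf{X}\sqcup\mathbf{Y})$ for all $\mathbf{X},\mathbf{Y}$, and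 monotone if $f(\mathbf{X})\le f(\mathbf{Y})$ whenever $X_q\subseteq Y_q$ for all $q$. $\boldsymbol{\emptyset}=(\emptyset,\dots,\emptyset)$. For $\mathbf{X}\in\mathbb{X}(N,k)$, $q\in\{1,\dots,k\}$ and $i\in N\setminus\bigcup_r X_r$, the marginal gain is $\rho_{q,i}(\mathbf{X})=f(X_1,\dots,X_{q-1},X_q\cup\{i\},X_{q+1},\dots,X_k)-f(\mathbf{X})$. Given nonnegative integer budgets $A_1,\dots,A_k$ and $D_1,\dots,D_k$, the attacker's feasible set is $\mathcal{X}=\{\mathbf{x}\in\{0,1\}^{kn}:\sum_{i=1}^n x_{q,i}\le A_q\ \forall q,\ \sum_{q=1}^k x_{q,i}\le 1\ \forall i\in N\}$, and $\Phi_D(\mathbf{x})=\max\{f(\mathbf{S}):\mathbf{S}\in\mathbb{X}(N,k),\ s_{q,i}\le 1-x_{q,i}\ \forall q,i,\ \sum_{i=1}^n s_{q,i}\le D_q\ \forall q\}$. *)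

theory Defs
  imports Complex_Main
begin

text \<open>A k-tuple (S_1,...,S_k) of pairwise disjoint subsets of N = {1..n} is represented
  as a function S :: nat => nat set, with S q the q-th component for q in {1..k}
  and S q = {} for q outside {1..k} (canonical representative).\<close>

definition kset :: "nat \<Rightarrow> nat \<Rightarrow> (nat \<Rightarrow> nat set) \<Rightarrow> bool" where
  "kset n k S \<longleftrightarrow> (\<forall>q. S q \<subseteq> {1..n}) \<and> (\<forall>q. q \<notin> {1..k} \<longrightarrow> S q = {}) \<and>
     (\<forall>q\<in>{1..k}. \<forall>r\<in>{1..k}. q \<noteq> r \<longrightarrow> S q \<inter> S r = {})"

definition kmeet :: "(nat \<Rightarrow> nat set) \<Rightarrow> (nat \<Rightarrow> nat set) \<Rightarrow> (nat \<Rightarrow> nat set)" where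
  "kmeet X Y = (\<lambda>q. X q \<inter> Y q)"

definition kjoin :: "nat \<Rightarrow> (nat \<Rightarrow> nat set) \<Rightarrow> (nat \<Rightarrow> nat set) \<Rightarrow> (nat \<Rightarrow> nat set)" where
  "kjoin k X Y = (\<lambda>q. if q \<in> {1..k}
      then (X q \<union> Y q) - (\<Union>r\<in>{1..k} - {q}. X r \<union> Y r) else {})"

definition k_submodular :: "nat \<Rightarrow> nat \<Rightarrow> ((nat \<Rightarrow> nat set) \<Rightarrow> real) \<Rightarrow> bool" where
  "k_submodular n k f \<longleftrightarrow> (\<forall>X Y. kset n k X \<longrightarrow> kset n k Y \<longrightarrow>
      f X + f Y \<ge> f (kmeet X Y) + f (kjoin k X Y))"

definition k_monotone :: "nat \<Rightarrow> nat \<Rightarrow> ((nat \<Rightarrow> nat set) \<Rightarrow> real) \<Rightarrow> bool" where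
  "k_monotone n k f \<longleftrightarrow> (\<forall>X Y. kset n k X \<longrightarrow> kset n k Y \<longrightarrow>
      (\<forall>q\<in>{1..k}. X q \<subseteq> Y q) \<longrightarrow> f X \<le> f Y)"

definition kempty :: "nat \<Rightarrow> nat set" where
  "kempty = (\<lambda>q. {})"

definition rho :: "((nat \<Rightarrow> nat set) \<Rightarrow> real) \<Rightarrow> nat \<Rightarrow> nat \<Rightarrow> (nat \<Rightarrow> nat set) \<Rightarrow> real" where
  "rho f q i X = f (X(q := X q \<union> {i})) - f X"

definition attacker_feasible :: "nat \<Rightarrow> nat \<Rightarrow> (nat \<Rightarrow> nat) \<Rightarrow> (nat \<Rightarrow> nat \<Rightarrow> nat) \<Rightarrow> bool" where
  "attacker_feasible n k A x \<longleftrightarrow> (\<forall>q i. x q i \<in> {0,1}) \<and>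
     (\<forall>q i. q \<notin> {1..k} \<or> i \<notin> {1..n} \<longrightarrow> x q i = 0) \<and>
     (\<forall>q\<in>{1..k}. (\<Sum>i=1..n. x q i) \<le> A q) \<and>
     (\<forall>i\<in>{1..n}. (\<Sum>q=1..k. x q i) \<le> 1)"

definition defender_feasible :: "nat \<Rightarrow> nat \<Rightarrow> (nat \<Rightarrow> nat) \<Rightarrow> (nat \<Rightarrow> nat \<Rightarrow> nat)
    \<Rightarrow> (nat \<Rightarrow> nat set) \<Rightarrow> bool" where
  "defender_feasible n k D x S \<longleftrightarrow> kset n k S \<and>
     (\<forall>q\<in>{1..k}. \<forall>i\<in>{1..n}. (if i \<in> S q then 1 else 0) \<le> 1 - int (x q i)) \<and>
     (\<forall>q\<in>{1..k}. card (S q) \<le> D q)"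

definition Phi_D :: "nat \<Rightarrow> nat \<Rightarrow> (nat \<Rightarrow> nat) \<Rightarrow> ((nat \<Rightarrow> nat set) \<Rightarrow> real)
    \<Rightarrow> (nat \<Rightarrow> nat \<Rightarrow> nat) \<Rightarrow> real" where
  "Phi_D n k D f x = Max (f ` {S. defender_feasible n k D x S})"

end

theory Submission
  imports Defs "HOL-Library.FuncSet"
begin

text \<open>Removing from \<open>\<^bold>S\<close> all pairs \<open>(q,i)\<close> hit by the attack \<open>\<^bold>x\<close> gives a defence feasible
  against \<open>\<^bold>x\<close>. By \<open>k\<close>-submodularity applied to \<open>\<^bold>S\<close> and a singleton, re-adding one
  element \<open>i\<close> to component \<open>q\<close> gains at most \<open>\<rho>\<^sub>q\<^sub>,\<^sub>i(\<^bold>\<emptyset>)\<close>; telescoping over the removed pairs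
  bounds the loss by the stated sum.\<close>

lemma kset_subset:
  assumes "kset n k S" and "\<And>q. T q \<subseteq> S q"
  shows "kset n k T"
  using assms unfolding kset_def by blast

lemma kset_finite: "kset n k S \<Longrightarrow> finite (S q)"
  unfolding kset_def by (meson finite_atLeastAtMost finite_subset)

lemma kset_singleton:
  "q \<in> {1..k} \<Longrightarrow> i \<in> {1..n} \<Longrightarrow> kset n k (kempty(q := {i}))"
  unfolding kset_def kempty_def by auto

lemma kmeet_singleton_fresh:
  "(\<And>r. i \<notin> S r) \<Longrightarrow> kmeet S (kempty(q := {i})) = kempty"
  unfolding kmeet_def kempty_def by (auto simp: fun_eq_iff)

lemma kjoin_singleton_fresh:
  assumes S: "kset n k S" and q: "q \<in> {1..k}" and fresh: "\<And>r. i \<notin> S r"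
  shows "kjoin k S (kempty(q := {i})) = S(q := S q \<union> {i})"
proof
  fix r
  have disj: "S r \<inter> S r' = {}" if "r \<in> {1..k}" "r' \<in> {1..k}" "r' \<noteq> r" for r'
    using S that unfolding kset_def by blast
  show "kjoin k S (kempty(q := {i})) r = (S(q := S q \<union> {i})) r"
  proof (cases "r \<in> {1..k}")
    case False
    then show ?thesis using S q unfolding kjoin_def kset_def by auto
  next
    case True
    then have "(\<Union>r'\<in>{1..k} - {r}. S r' \<union> (kempty(q := {i})) r') =
        (\<Union>r'\<in>{1..k} - {r}. S r') \<union> (if r = q then {} else {i})"
      using q by (auto simp: kempty_def split: if_splits)
    moreover have "S r \<inter> (\<Union>r'\<in>{1..k} - {r}. S r') = {}"
      using disj True by blast
    ultimately show ?thesis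
      using True fresh unfolding kjoin_def by (auto simp: kempty_def)
  qed
qed

lemma k_submodular_marginal_le_rho_kempty:
  assumes sub: "k_submodular n k f" and S: "kset n k S"
    and q: "q \<in> {1..k}" and i: "i \<in> {1..n}" and fresh: "\<And>r. i \<notin> S r"
  shows "rho f q i S \<le> rho f q i kempty"
proof -
  have "f S + f (kempty(q := {i})) \<ge>
      f (kmeet S (kempty(q := {i}))) + f (kjoin k S (kempty(q := {i})))"
    using sub S kset_singleton[OF q i] unfolding k_submodular_def by blast
  then show ?thesis
    unfolding kmeet_singleton_fresh[OF fresh] kjoin_singleton_fresh[OF S q fresh] rho_def
    by (simp add: kempty_def)
qed

lemma k_submodular_remove_pairs:
  assumes sub: "k_submodular n k f" and "finite P"
  shows "kset n k S \<Longrightarrow> P \<subseteq> {(q,i). q \<in> {1..k} \<and> i \<in> S q} \<Longrightarrow>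
    f S - f (\<lambda>q. S q - {i. (q,i) \<in> P}) \<le> (\<Sum>(q,i)\<in>P. rho f q i kempty)"
  using \<open>finite P\<close>
proof (induction P arbitrary: S rule: finite_induct)
  case empty
  then show ?case by simp
next
  case (insert p P S)
  obtain q i where p: "p = (q, i)" by (cases p)
  have q: "q \<in> {1..k}" and iS: "i \<in> S q" using insert.prems p by auto
  have i: "i \<in> {1..n}" using insert.prems(1) iS unfolding kset_def by blast
  define S' where "S' = S(q := S q - {i})"
  have S': "kset n k S'" using insert.prems(1) by (rule kset_subset) (auto simp: S'_def)
  have fresh: "i \<notin> S' r" for r
  proof (cases "r = q")
    case False
    then have "S q \<inter> S r = {}"
      using insert.prems(1) q unfolding kset_def by (cases "r \<in> {1..k}") auto
    then show ?thesis using iS False by (auto simp: S'_def)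
  qed (simp add: S'_def)
  have S_eq: "S = S'(q := S' q \<union> {i})"
    using iS unfolding S'_def by (auto simp: fun_eq_iff)
  have "f S - f S' \<le> rho f q i kempty"
    using k_submodular_marginal_le_rho_kempty[OF sub S' q i fresh] S_eq by (simp add: rho_def)
  moreover have "f S' - f (\<lambda>r. S' r - {j. (r,j) \<in> P}) \<le> (\<Sum>(r,j)\<in>P. rho f r j kempty)"
    using insert.prems(2) insert.hyps(2) p by (intro insert.IH[OF S']) (auto simp: S'_def)
  moreover have "(\<lambda>r. S' r - {j. (r,j) \<in> P}) = (\<lambda>r. S r - {j. (r,j) \<in> insert p P})"
    unfolding S'_def p by (auto simp: fun_eq_iff)
  ultimately show ?case using insert.hyps p by simp
qed

lemma finite_defender_feasible: "finite {S. defender_feasible n k D x S}"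
proof (rule finite_subset)
  let ?ext = "\<lambda>g q. if q \<in> {1..k} then g q else {}"
  show "{S. defender_feasible n k D x S} \<subseteq> ?ext ` PiE {1..k} (\<lambda>_. Pow {1..n})"
  proof
    fix S assume "S \<in> {S. defender_feasible n k D x S}"
    then have S: "kset n k S" unfolding defender_feasible_def by auto
    then have "S = ?ext (restrict S {1..k})" unfolding kset_def by (auto simp: fun_eq_iff)
    moreover have "restrict S {1..k} \<in> PiE {1..k} (\<lambda>_. Pow {1..n})"
      using S unfolding kset_def by auto
    ultimately show "S \<in> ?ext ` PiE {1..k} (\<lambda>_. Pow {1..n})" by blast
  qed
  show "finite (?ext ` PiE {1..k} (\<lambda>_. Pow {1..n}))"
    by (intro finite_imageI finite_PiE) auto
qed

lemma Phi_D_ge: "defender_feasible n k D x S \<Longrightarrow> f S \<le> Phi_D n k D f x"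
  unfolding Phi_D_def using finite_defender_feasible by (intro Max_ge) auto

lemma defender_feasible_remove_attacked:
  assumes S: "defender_feasible n k D y S" and x: "attacker_feasible n k A x"
  shows "defender_feasible n k D x (\<lambda>q. S q - {i. x q i = 1})"
  unfolding defender_feasible_def
proof (intro conjI ballI)
  have kS: "kset n k S" using S unfolding defender_feasible_def by auto
  then show "kset n k (\<lambda>q. S q - {i. x q i = 1})" by (rule kset_subset) auto
  fix q assume q: "q \<in> {1..k}"
  have "card (S q - {i. x q i = 1}) \<le> card (S q)"
    using kset_finite[OF kS] by (rule card_mono) auto
  also have "\<dots> \<le> D q" using S q unfolding defender_feasible_def by auto
  finally show "card (S q - {i. x q i = 1}) \<le> D q" .
  fix i
  have "x q i \<in> {0,1}" using x unfolding attacker_feasible_def by auto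
  then show "(if i \<in> S q - {i. x q i = 1} then 1 else 0) \<le> 1 - int (x q i)" by auto
qed

lemma sum_indicator_pairs:
  fixes g :: "nat \<Rightarrow> nat \<Rightarrow> real"
  assumes "finite Q" and fin: "\<And>q. finite (S q)" and x01: "\<And>q i. x q i \<in> {0,1}"
  shows "(\<Sum>q\<in>Q. \<Sum>i\<in>S q. g q i * real (x q i)) =
    (\<Sum>(q,i)\<in>{(q,i). q \<in> Q \<and> i \<in> S q \<and> x q i = 1}. g q i)"
proof -
  have "(\<Sum>q\<in>Q. \<Sum>i\<in>S q. g q i * real (x q i)) = (\<Sum>(q,i)\<in>Sigma Q S. g q i * real (x q i))"
    using \<open>finite Q\<close> fin by (subst sum.Sigma) auto
  also have "\<dots> = (\<Sum>(q,i)\<in>Sigma Q S. if x q i = 1 then g q i else 0)"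
  proof (rule sum.cong[OF refl], clarify)
    fix q i
    show "g q i * real (x q i) = (if x q i = 1 then g q i else 0)"
      using x01[of q i] by auto
  qed
  also have "\<dots> = (\<Sum>(q,i)\<in>{p \<in> Sigma Q S. x (fst p) (snd p) = 1}. g q i)"
    using \<open>finite Q\<close> fin by (subst sum.inter_filter) (auto simp: split_def intro!: sum.cong)
  also have "{p \<in> Sigma Q S. x (fst p) (snd p) = 1} = {(q,i). q \<in> Q \<and> i \<in> S q \<and> x q i = 1}"
    by auto
  finally show ?thesis .
qed

theorem theorem1:
  fixes n k :: nat and A D :: "nat \<Rightarrow> nat" and f :: "(nat \<Rightarrow> nat set) \<Rightarrow> real"
    and xh x :: "nat \<Rightarrow> nat \<Rightarrow> nat" and Sh :: "nat \<Rightarrow> nat set"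
  assumes "0 < n" and "0 < k"
    and "k_submodular n k f" and "k_monotone n k f"
    and "attacker_feasible n k A xh"
    and "defender_feasible n k D xh Sh" and "Phi_D n k D f xh = f Sh"
    and "attacker_feasible n k A x"
  shows "Phi_D n k D f x \<ge>
    Phi_D n k D f xh - (\<Sum>q=1..k. \<Sum>i\<in>Sh q. rho f q i kempty * real (x q i))"
proof -
  have Sh: "kset n k Sh" using assms(6) unfolding defender_feasible_def by auto
  define P where "P = {(q,i). q \<in> {1..k} \<and> i \<in> Sh q \<and> x q i = 1}"
  have "finite P"
    by (rule finite_subset[of _ "{1..k} \<times> {1..n}"]) (use Sh in \<open>auto simp: P_def kset_def\<close>)
  have removed: "(\<lambda>q. Sh q - {i. (q,i) \<in> P}) = (\<lambda>q. Sh q - {i. x q i = 1})"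
    using Sh unfolding P_def kset_def by (auto simp: fun_eq_iff)
  have "f Sh - f (\<lambda>q. Sh q - {i. x q i = 1}) \<le> (\<Sum>(q,i)\<in>P. rho f q i kempty)"
    using k_submodular_remove_pairs[OF assms(3) \<open>finite P\<close> Sh] unfolding removed
    by (auto simp: P_def)
  also have "\<dots> = (\<Sum>q=1..k. \<Sum>i\<in>Sh q. rho f q i kempty * real (x q i))"
    using assms(8) kset_finite[OF Sh] unfolding P_def attacker_feasible_def
    by (intro sum_indicator_pairs[symmetric]) auto
  finally show ?thesis
    using Phi_D_ge[where f = f, OF defender_feasible_remove_attacked[OF assms(6,8)]] assms(7) by simp
qed

end
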